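(* Let $\mathcal{H}^{(1)}$ be the right $\mathbb{H}$-vector space of $1$-forms $\omega=df$ on $\mathbb{H}$ invariant under translation by $L$ with $f:\mathbb{H}\to\mathbb{H}$ left-regular. Then the period map $P:\mathcal{H}^{(1)}\to\mathbb{H}^4$, $P(\omega)={}^t(\int_{\gamma_1}\omega,\dots,\int_{\gamma_4}\omega)$, is injective.
   Context: $L\subset\mathbb{H}$ is a full-rank lattice with $\mathbb{Z}$-basis $\lambda_1,\dots,\lambda_4$ and $\gamma_h(s)=(s-\frac12)\lambda_h$, $s\in[0,1]$. With $q=t+e_1x_1+e_2x_2+e_3x_3$, $f$ is left-regular if $\partial_tf+e_1\partial_{x_1}f+e_2\partial_{x_2}f+e_3\partial_{x_3}f=0$. *)

theory Defs
  imports "HOL-Analysis.Analysis"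
begin

text \<open>Quaternions q = t + e1 x1 + e2 x2 + e3 x3 are represented as vectors in real^4;
  coordinates t, x1, x2, x3 are the components with indices 1, 2, 3, 4 of the index type 4.\<close>

definition qmk :: "real \<Rightarrow> real \<Rightarrow> real \<Rightarrow> real \<Rightarrow> real^4" where
  "qmk a b c d = (\<chi> i. if i = 1 then a else if i = 2 then b else if i = 3 then c else d)"

definition qt :: "real^4 \<Rightarrow> real" where "qt q = q $ 1"
definition qx1 :: "real^4 \<Rightarrow> real" where "qx1 q = q $ 2"
definition qx2 :: "real^4 \<Rightarrow> real" where "qx2 q = q $ 3"
definition qx3 :: "real^4 \<Rightarrow> real" where "qx3 q = q $ 4"

text \<open>Hamilton product (e1^2 = e2^2 = e3^2 = e1 e2 e3 = -1).\<close>
definition qmult :: "real^4 \<Rightarrow> real^4 \<Rightarrow> real^4" where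
  "qmult p q = qmk
     (qt p * qt q - qx1 p * qx1 q - qx2 p * qx2 q - qx3 p * qx3 q)
     (qt p * qx1 q + qx1 p * qt q + qx2 p * qx3 q - qx3 p * qx2 q)
     (qt p * qx2 q - qx1 p * qx3 q + qx2 p * qt q + qx3 p * qx1 q)
     (qt p * qx3 q + qx1 p * qx2 q - qx2 p * qx1 q + qx3 p * qt q)"

definition qone :: "real^4" where "qone = qmk 1 0 0 0"
definition qe1 :: "real^4" where "qe1 = qmk 0 1 0 0"
definition qe2 :: "real^4" where "qe2 = qmk 0 0 1 0"
definition qe3 :: "real^4" where "qe3 = qmk 0 0 0 1"

text \<open>Left-regular (Fueter): f is C^1 (derivative f' q, with continuous partial derivatives)
  and  d_t f + e1 d_x1 f + e2 d_x2 f + e3 d_x3 f = 0 (left multiplication by e_i).\<close>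
definition left_regular :: "(real^4 \<Rightarrow> real^4) \<Rightarrow> bool" where
  "left_regular f \<longleftrightarrow> (\<exists>f'. (\<forall>q. (f has_derivative f' q) (at q))
      \<and> (\<forall>v. continuous_on UNIV (\<lambda>q. f' q v))
      \<and> (\<forall>q. f' q qone + qmult qe1 (f' q qe1) + qmult qe2 (f' q qe2)
               + qmult qe3 (f' q qe3) = 0))"

definition lattice :: "(nat \<Rightarrow> real^4) \<Rightarrow> (real^4) set" where
  "lattice lam = {(\<Sum>h\<in>{1..4}. of_int (n h) *\<^sub>R lam h) | n :: nat \<Rightarrow> int. True}"

text \<open>A quaternion-valued 1-form is represented by the map q \<mapsto> (linear map on tangent vectors).
  H1 lam: the 1-forms omega = df, f left-regular, invariant under translation by L.\<close>
definition H1 :: "(nat \<Rightarrow> real^4) \<Rightarrow> (real^4 \<Rightarrow> real^4 \<Rightarrow> real^4) set" where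
  "H1 lam = {\<omega>. (\<exists>f. left_regular f \<and> (\<forall>q. (f has_derivative \<omega> q) (at q)))
                 \<and> (\<forall>l\<in>lattice lam. \<forall>q. \<omega> (q + l) = \<omega> q)}"

definition form_integral :: "(real^4 \<Rightarrow> real^4 \<Rightarrow> real^4) \<Rightarrow> (real \<Rightarrow> real^4) \<Rightarrow> real^4" where
  "form_integral \<omega> g = integral {0..1} (\<lambda>s. \<omega> (g s) (vector_derivative g (at s within {0..1})))"

definition gam :: "(nat \<Rightarrow> real^4) \<Rightarrow> nat \<Rightarrow> real \<Rightarrow> real^4" where
  "gam lam h s = (s - 1/2) *\<^sub>R lam h"

definition period_map :: "(nat \<Rightarrow> real^4) \<Rightarrow> (real^4 \<Rightarrow> real^4 \<Rightarrow> real^4) \<Rightarrow> real^4^4" where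
  "period_map lam \<omega> = (\<chi> i. form_integral \<omega> (gam lam (if i = 1 then 1 else if i = 2 then 2
                                                    else if i = 3 then 3 else 4)))"

end

theory Submission
  imports Defs
begin

text \<open>If two forms in \<open>H1 lam\<close> have the same periods, their difference is \<open>dg\<close> with \<open>g\<close>
  left-regular and, since the periods are the increments of \<open>g\<close> along the generators of \<open>L\<close>,
  \<open>L\<close>-periodic. A linear change of variables carrying \<open>\<int>\<^sup>4\<close> onto \<open>L\<close> turns \<open>g\<close> into a function
  on the torus \<open>\<real>\<^sup>4/\<int>\<^sup>4\<close>. Pointwise, the sum of the squares of all first partial derivatives
  equals the squared norm of the Fueter operator plus a fixed combination of \<open>2\<times>2\<close> minors of the
  Jacobian, and every such minor integrates to zero over the torus. Hence the Jacobian of \<open>g\<close>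
  vanishes and the two forms coincide. The integration by parts behind the minors is done with
  difference quotients, so only \<open>C\<^sup>1\<close> regularity is needed.\<close>

(* Polynomial.content would shadow the content (volume) of a box. *)
hide_const (open) Polynomial.content

definition unit_periodic :: "('a::euclidean_space \<Rightarrow> 'b) \<Rightarrow> bool" where
  "unit_periodic F \<longleftrightarrow> (\<forall>k\<in>Basis. \<forall>y. F (y + k) = F y)"

lemma unit_periodic_shift: "unit_periodic F \<Longrightarrow> unit_periodic (\<lambda>y. F (y + c))"
  unfolding unit_periodic_def by (metis add.commute add.left_commute)

lemma unit_periodic_add_of_int:
  assumes "unit_periodic F" "k \<in> Basis"
  shows "F (y + of_int n *\<^sub>R k) = F y"
proof (induction n rule: int_induct[where k = 0])
  case base
  then show ?case by simp
next
  case (step1 i)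
  have "F (y + of_int (i + 1) *\<^sub>R k) = F ((y + of_int i *\<^sub>R k) + k)"
    by (simp add: algebra_simps)
  with step1 assms show ?case by (simp add: unit_periodic_def)
next
  case (step2 i)
  have "F (y + of_int i *\<^sub>R k) = F ((y + of_int (i - 1) *\<^sub>R k) + k)"
    by (simp add: algebra_simps)
  with step2 assms show ?case by (simp add: unit_periodic_def)
qed

lemma unit_periodic_add_integer_vector:
  assumes "unit_periodic F"
  shows "F (y + (\<Sum>k\<in>Basis. of_int (n k) *\<^sub>R k)) = F y"
proof -
  have "F (y + (\<Sum>k\<in>S. of_int (n k) *\<^sub>R k)) = F y" if "S \<subseteq> Basis" for S
    using finite_subset[OF that finite_Basis] that
  proof (induction S)
    case (insert k S)
    then have "F (y + (\<Sum>k\<in>insert k S. of_int (n k) *\<^sub>R k))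
        = F ((y + (\<Sum>k\<in>S. of_int (n k) *\<^sub>R k)) + of_int (n k) *\<^sub>R k)"
      by (simp add: algebra_simps)
    with insert assms show ?case by (simp add: unit_periodic_add_of_int)
  qed simp
  then show ?thesis by blast
qed

lemma unit_periodic_cube_representative:
  assumes "unit_periodic F"
  obtains z where "z \<in> cbox 0 One" "\<And>y. F (y + w) = F (y + z)"
proof -
  define z where "z = w - (\<Sum>k\<in>Basis. of_int \<lfloor>w \<bullet> k\<rfloor> *\<^sub>R k)"
  have "z \<bullet> k = frac (w \<bullet> k)" if "k \<in> Basis" for k
    using that by (simp add: z_def inner_diff_left inner_sum_left_Basis frac_def)
  then have "z \<in> cbox 0 One"
    by (simp add: mem_box frac_ge_0 frac_lt_1 less_imp_le)
  moreover have "F (y + w) = F (y + z)" for y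
    using unit_periodic_add_integer_vector[OF assms, of "y + z" "\<lambda>k. \<lfloor>w \<bullet> k\<rfloor>"]
    by (simp add: z_def)
  ultimately show ?thesis using that by blast
qed

lemma integrable_on_cbox_if_continuous:
  fixes f :: "'a::euclidean_space \<Rightarrow> 'b::banach"
  shows "continuous_on UNIV f \<Longrightarrow> f integrable_on cbox a b"
  by (rule integrable_continuous, rule continuous_on_subset) auto

lemma continuous_on_translate:
  fixes f :: "'a::real_normed_vector \<Rightarrow> 'b::topological_space"
  shows "continuous_on UNIV f \<Longrightarrow> continuous_on UNIV (\<lambda>y. f (y + w))"
  by (rule continuous_on_compose2[of UNIV f]) (auto intro!: continuous_intros)

lemma integral_unit_cube_shift_Basis:
  fixes F :: "'a::euclidean_space \<Rightarrow> 'b::banach"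
  assumes cont: "continuous_on UNIV F" and per: "unit_periodic F" and k: "k \<in> Basis"
    and t: "0 \<le> t" "t \<le> 1"
  shows "integral (cbox 0 One) (\<lambda>y. F (y + t *\<^sub>R k)) = integral (cbox 0 One) F"
proof -
  define D where "D = cbox (t *\<^sub>R k) (One + t *\<^sub>R k)"
  define b where "b = (One::'a) - (1 - t) *\<^sub>R k"
  have box_iff: "x \<in> cbox p q \<longleftrightarrow> (p \<bullet> k \<le> x \<bullet> k \<and> x \<bullet> k \<le> q \<bullet> k)
      \<and> (\<forall>i\<in>Basis - {k}. p \<bullet> i \<le> x \<bullet> i \<and> x \<bullet> i \<le> q \<bullet> i)" for x p q :: 'a
    using k by (auto simp: mem_box)
  have "integral (cbox 0 One) (\<lambda>y. F (y + t *\<^sub>R k)) = integral D F"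
  proof -
    have "((F \<circ> (+) (t *\<^sub>R k)) has_integral integral D F) (cbox 0 One)"
      using has_integral_shift_cbox_iff[of F "t *\<^sub>R k" "integral D F" 0 One]
        integrable_on_cbox_if_continuous[OF cont]
      unfolding D_def by (simp add: add.commute has_integral_integral)
    then show ?thesis by (simp add: o_def add.commute integral_unique)
  qed
  \<comment> \<open>cut the translated cube at \<open>x \<bullet> k = 1\<close> and move the upper slab back by \<open>-k\<close>\<close>
  also have "\<dots> = integral (D \<inter> {x. x \<bullet> k \<le> 1}) F + integral (D \<inter> {x. x \<bullet> k \<ge> 1}) F"
    using integral_split[OF _ k] integrable_on_cbox_if_continuous[OF cont] unfolding D_def by blast
  also have "D \<inter> {x. x \<bullet> k \<le> 1} = cbox 0 One \<inter> {x. x \<bullet> k \<ge> t}"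
    using k t unfolding D_def
    by (auto simp: box_iff inner_Basis inner_add_left algebra_simps split: if_splits)
  also have "D \<inter> {x. x \<bullet> k \<ge> 1} = cbox (0 + k) (b + k)"
    using k t unfolding D_def b_def
    by (auto simp: box_iff inner_Basis inner_add_left inner_diff_left algebra_simps split: if_splits)
  also have "integral (cbox (0 + k) (b + k)) F = integral (cbox 0 b) F"
  proof -
    have "((F \<circ> (+) k) has_integral integral (cbox (0 + k) (b + k)) F) (cbox 0 b)"
      using has_integral_shift_cbox_iff integrable_on_cbox_if_continuous[OF cont] by blast
    moreover have "F \<circ> (+) k = F" using per k by (auto simp: o_def add.commute unit_periodic_def)
    ultimately show ?thesis by (simp add: integral_unique)
  qed
  also have "cbox 0 b = cbox 0 One \<inter> {x. x \<bullet> k \<le> t}"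
    using k t unfolding b_def
    by (auto simp: box_iff inner_Basis inner_diff_left algebra_simps split: if_splits)
  also have "integral (cbox 0 One \<inter> {x. t \<le> x \<bullet> k}) F + integral (cbox 0 One \<inter> {x. x \<bullet> k \<le> t}) F
      = integral (cbox 0 One) F"
    using integral_split[OF integrable_on_cbox_if_continuous[OF cont] k, where c = t] by simp
  finally show ?thesis .
qed

lemma integral_unit_cube_shift:
  fixes F :: "'a::euclidean_space \<Rightarrow> 'b::banach"
  assumes cont: "continuous_on UNIV F" and per: "unit_periodic F"
  shows "integral (cbox 0 One) (\<lambda>y. F (y + w)) = integral (cbox 0 One) F"
proof -
  obtain z where z: "z \<in> cbox 0 One" "\<And>y. F (y + w) = F (y + z)"
    using unit_periodic_cube_representative[OF per] by blast
  have "integral (cbox 0 One) (\<lambda>y. F (y + (\<Sum>k\<in>S. (z \<bullet> k) *\<^sub>R k))) = integral (cbox 0 One) F"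
    if "S \<subseteq> Basis" for S
    using finite_subset[OF that finite_Basis] that
  proof (induction S)
    case (insert k S)
    define G where "G y = F (y + (\<Sum>k\<in>S. (z \<bullet> k) *\<^sub>R k))" for y
    have "continuous_on UNIV G"
      unfolding G_def using cont by (rule continuous_on_translate)
    moreover have "unit_periodic G" unfolding G_def using unit_periodic_shift[OF per] .
    moreover have "0 \<le> z \<bullet> k" "z \<bullet> k \<le> 1" using z(1) insert.prems by (auto simp: mem_box)
    ultimately have "integral (cbox 0 One) (\<lambda>y. G (y + (z \<bullet> k) *\<^sub>R k)) = integral (cbox 0 One) G"
      using insert.prems by (intro integral_unit_cube_shift_Basis) auto
    with insert show ?case unfolding G_def by (simp add: algebra_simps)
  qed simp
  from this[OF order_refl] show ?thesis by (simp add: z euclidean_representation)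
qed

lemma continuous_on_if_has_derivative:
  "(\<And>y. (F has_derivative F' y) (at y)) \<Longrightarrow> continuous_on UNIV F"
  using has_derivative_continuous continuous_at_imp_continuous_on by blast

lemma has_derivative_translate:
  assumes "\<And>y. (F has_derivative F' y) (at y)"
  shows "((\<lambda>y. F (y + c)) has_derivative F' (y + c)) (at y)"
  using has_derivative_compose[OF has_derivative_add_const[OF has_derivative_ident] assms]
  by (simp add: o_def)

lemma derivative_translation_invariant:
  assumes der: "\<And>y. (F has_derivative F' y) (at y)" and per: "\<And>y. F (y + c) = F y"
  shows "F' (y + c) = F' y"
proof -
  have "(F has_derivative F' (y + c)) (at y)"
    using has_derivative_translate[OF der, of c y] by (simp add: per)
  then show ?thesis using has_derivative_unique der by blast
qed

lemma unit_periodic_derivative: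
  "(\<And>y. (F has_derivative F' y) (at y)) \<Longrightarrow> unit_periodic F \<Longrightarrow> unit_periodic F'"
  unfolding unit_periodic_def using derivative_translation_invariant by blast

lemma difference_quotient_uniform:
  fixes F :: "'a::euclidean_space \<Rightarrow> real"
  assumes der: "\<And>y. (F has_derivative F' y) (at y)" and cont: "continuous_on UNIV (\<lambda>y. F' y v)"
    and S: "compact S" and e: "e > 0"
  obtains d where "d > 0" "\<And>y s. y \<in> S \<Longrightarrow> s \<noteq> 0 \<Longrightarrow> \<bar>s\<bar> < d \<Longrightarrow>
      \<bar>(F (y + s *\<^sub>R v) - F y) / s - F' y v\<bar> \<le> e"
proof -
  obtain R where R: "\<And>y. y \<in> S \<Longrightarrow> norm y \<le> R"
    using compact_imp_bounded[OF S] bounded_iff by blast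
  define K where "K = cball (0::'a) (R + 1)"
  have "uniformly_continuous_on K (\<lambda>y. F' y v)"
    unfolding K_def by (rule compact_uniformly_continuous[OF continuous_on_subset[OF cont]]) auto
  then obtain d0 where d0: "d0 > 0" and d0u: "\<And>x x'. x \<in> K \<Longrightarrow> x' \<in> K \<Longrightarrow> dist x' x < d0
      \<Longrightarrow> dist (F' x' v) (F' x v) < e"
    unfolding uniformly_continuous_on_def using e by blast
  define d where "d = min d0 1 / (norm v + 1)"
  have nv: "norm v + 1 > 0" by (simp add: add_nonneg_pos)
  have d: "d > 0" unfolding d_def using d0 nv by simp
  have near: "\<bar>F' (y + z *\<^sub>R v) v - F' y v\<bar> < e" if y: "y \<in> S" and z: "\<bar>z\<bar> < d" for y z
  proof -
    have "norm (z *\<^sub>R v) \<le> d * norm v" using z by (simp add: mult_right_mono)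
    also have "\<dots> < d * (norm v + 1)" using d by simp
    also have "\<dots> = min d0 1" using nv by (simp add: d_def)
    finally have small: "norm (z *\<^sub>R v) < d0" "norm (z *\<^sub>R v) < 1" by auto
    have "y \<in> K" "y + z *\<^sub>R v \<in> K"
      using R[OF y] small norm_triangle_ineq[of y "z *\<^sub>R v"] by (auto simp: K_def)
    with small show ?thesis using d0u by (simp add: dist_norm dist_real_def)
  qed
  show ?thesis
  proof (rule that[OF d])
    fix y s assume y: "y \<in> S" and s: "s \<noteq> 0" "\<bar>s\<bar> < d"
    have D: "DERIV (\<lambda>z. F (y + z *\<^sub>R v)) z :> F' (y + z *\<^sub>R v) v" for z
    proof -
      have "((\<lambda>z. F (y + z *\<^sub>R v)) has_derivative (\<lambda>h. F' (y + z *\<^sub>R v) (h *\<^sub>R v))) (at z)"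
        by (rule has_derivative_compose[OF _ der]) (auto intro!: derivative_eq_intros)
      then show ?thesis
        using linear_cmul[OF has_derivative_linear[OF der]]
        by (simp add: has_field_derivative_def mult_commute_abs)
    qed
    obtain z where z: "\<bar>z\<bar> < d" and eq: "F (y + s *\<^sub>R v) - F y = s * F' (y + z *\<^sub>R v) v"
    proof (cases "s > 0")
      case True
      from MVT2[OF True D] obtain z where "0 < z" "z < s"
        "F (y + s *\<^sub>R v) - F (y + 0 *\<^sub>R v) = (s - 0) * F' (y + z *\<^sub>R v) v" by blast
      then show ?thesis using that[of z] s by auto
    next
      case False
      with s have "s < 0" by simp
      from MVT2[OF this D] obtain z where "s < z" "z < 0"
        "F (y + 0 *\<^sub>R v) - F (y + s *\<^sub>R v) = (0 - s) * F' (y + z *\<^sub>R v) v" by blast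
      then show ?thesis using that[of z] s by (auto simp: algebra_simps)
    qed
    with s near[OF y z] show "\<bar>(F (y + s *\<^sub>R v) - F y) / s - F' y v\<bar> \<le> e" by simp
  qed
qed

lemma tendsto_integral_difference_quotient:
  fixes F c :: "'a::euclidean_space \<Rightarrow> real"
  assumes der: "\<And>y. (F has_derivative F' y) (at y)" and cont: "continuous_on UNIV (\<lambda>y. F' y v)"
    and c: "continuous_on UNIV c"
  shows "((\<lambda>s. integral (cbox 0 One) (\<lambda>y. c y * ((F (y + s *\<^sub>R v) - F y) / s)))
          \<longlongrightarrow> integral (cbox 0 One) (\<lambda>y. c y * F' y v)) (at 0)"
proof (rule LIM_I)
  fix r :: real assume r: "r > 0"
  have "bounded (c ` cbox 0 One)"
    by (intro compact_imp_bounded compact_continuous_image continuous_on_subset[OF c]) auto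
  then obtain M where M: "M > 0" "\<And>y. y \<in> cbox 0 One \<Longrightarrow> \<bar>c y\<bar> \<le> M"
    unfolding bounded_pos by auto
  obtain d where d: "d > 0" and dq: "\<And>y s. y \<in> cbox 0 One \<Longrightarrow> s \<noteq> 0 \<Longrightarrow> \<bar>s\<bar> < d \<Longrightarrow>
      \<bar>(F (y + s *\<^sub>R v) - F y) / s - F' y v\<bar> \<le> r / (2 * M)"
    using difference_quotient_uniform[OF der cont compact_cbox, of "r / (2 * M)"] r M by auto
  have contF: "continuous_on UNIV (\<lambda>y. F (y + w))" for w
    using continuous_on_if_has_derivative[OF der] by (rule continuous_on_translate)
  have "\<bar>integral (cbox 0 One) (\<lambda>y. c y * ((F (y + s *\<^sub>R v) - F y) / s))
      - integral (cbox 0 One) (\<lambda>y. c y * F' y v)\<bar> < r" if s: "s \<noteq> 0" "\<bar>s\<bar> < d" for s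
  proof -
    define E where "E y = c y * ((F (y + s *\<^sub>R v) - F y) / s) - c y * F' y v" for y
    have "continuous_on UNIV E"
      unfolding E_def using contF[of "s *\<^sub>R v"] contF[of 0] s
      by (auto intro!: continuous_intros c cont)
    moreover have "\<bar>E y\<bar> \<le> M * (r / (2 * M))" if "y \<in> cbox 0 One" for y
    proof -
      have "\<bar>E y\<bar> = \<bar>c y\<bar> * \<bar>(F (y + s *\<^sub>R v) - F y) / s - F' y v\<bar>"
        by (simp add: E_def abs_mult[symmetric] algebra_simps)
      also have "\<dots> \<le> M * (r / (2 * M))"
        using M(2)[OF that] dq[OF that s] by (intro mult_mono) auto
      finally show ?thesis .
    qed
    ultimately have "norm (integral (cbox 0 One) E) \<le> M * (r / (2 * M)) * content (cbox (0::'a) One)"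
      using r M by (intro has_integral_bound[OF _ integrable_integral[OF integrable_on_cbox_if_continuous]])
        auto
    also have "\<dots> < r" using r M by simp
    finally show ?thesis
      unfolding E_def using contF[of "s *\<^sub>R v"] contF[of 0] s
      by (subst (asm) integral_diff) (auto intro!: integrable_on_cbox_if_continuous continuous_intros c cont)
  qed
  with d show "\<exists>d>0. \<forall>s. s \<noteq> 0 \<and> norm (s - 0) < d \<longrightarrow> norm (integral (cbox 0 One)
      (\<lambda>y. c y * ((F (y + s *\<^sub>R v) - F y) / s)) - integral (cbox 0 One) (\<lambda>y. c y * F' y v)) < r"
    by auto
qed

lemma integral_unit_cube_derivative_eq_0:
  fixes F :: "'a::euclidean_space \<Rightarrow> real"
  assumes der: "\<And>y. (F has_derivative F' y) (at y)" and cont: "continuous_on UNIV (\<lambda>y. F' y v)"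
    and per: "unit_periodic F"
  shows "integral (cbox 0 One) (\<lambda>y. F' y v) = 0"
proof -
  have contF: "continuous_on UNIV (\<lambda>y. F (y + w))" for w
    using continuous_on_if_has_derivative[OF der] by (rule continuous_on_translate)
  have "integral (cbox 0 One) (\<lambda>y. 1 * ((F (y + s *\<^sub>R v) - F y) / s)) = 0" for s
    using integral_unit_cube_shift[OF continuous_on_if_has_derivative[OF der] per, of "s *\<^sub>R v"]
      contF[of "s *\<^sub>R v"] continuous_on_if_has_derivative[OF der]
    by (simp add: integral_diff integrable_on_cbox_if_continuous)
  then have zero: "(\<lambda>s. integral (cbox 0 One) (\<lambda>y. 1 * ((F (y + s *\<^sub>R v) - F y) / s))) = (\<lambda>s. 0)"
    by (rule ext)
  have "((\<lambda>s. integral (cbox 0 One) (\<lambda>y. 1 * ((F (y + s *\<^sub>R v) - F y) / s)))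
      \<longlongrightarrow> integral (cbox 0 One) (\<lambda>y. 1 * F' y v)) (at 0)"
    by (rule tendsto_integral_difference_quotient[OF der cont continuous_on_const])
  then have "((\<lambda>s::real. 0) \<longlongrightarrow> integral (cbox 0 One) (\<lambda>y. 1 * F' y v)) (at 0)"
    unfolding zero .
  from tendsto_unique[OF at_neq_bot tendsto_const this] show ?thesis by simp
qed

lemma integral_unit_cube_by_parts:
  fixes a b :: "'a::euclidean_space \<Rightarrow> real"
  assumes da: "\<And>y. (a has_derivative a' y) (at y)" and db: "\<And>y. (b has_derivative b' y) (at y)"
    and ca: "continuous_on UNIV (\<lambda>y. a' y u)" and cb: "continuous_on UNIV (\<lambda>y. b' y u)"
    and pa: "unit_periodic a" and pb: "unit_periodic b"
  shows "integral (cbox 0 One) (\<lambda>y. a' y u * b y) = - integral (cbox 0 One) (\<lambda>y. a y * b' y u)"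
proof -
  have c1: "continuous_on UNIV (\<lambda>y. a y * b' y u)" and c2: "continuous_on UNIV (\<lambda>y. a' y u * b y)"
    using continuous_on_if_has_derivative[OF da] continuous_on_if_has_derivative[OF db] ca cb
    by (auto intro!: continuous_intros)
  have "integral (cbox 0 One) (\<lambda>y. a y * b' y u + a' y u * b y) = 0"
  proof (rule integral_unit_cube_derivative_eq_0)
    show "((\<lambda>y. a y * b y) has_derivative (\<lambda>h. a y * b' y h + a' y h * b y)) (at y)" for y
      using has_derivative_mult[OF da db] .
    show "unit_periodic (\<lambda>y. a y * b y)" using pa pb by (simp add: unit_periodic_def)
  qed (use c1 c2 in \<open>auto intro!: continuous_intros\<close>)
  then show ?thesis
    using c1 c2 by (simp add: integral_add integrable_on_cbox_if_continuous eq_neg_iff_add_eq_0 add.commute)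
qed

lemma integral_unit_cube_difference_quotient_by_parts:
  fixes a h :: "'a::euclidean_space \<Rightarrow> real"
  assumes ca: "continuous_on UNIV a" and ch: "continuous_on UNIV h"
    and pa: "unit_periodic a" and ph: "unit_periodic h"
  shows "integral (cbox 0 One) (\<lambda>y. a y * ((h (y + s *\<^sub>R v) - h y) / s))
       = - integral (cbox 0 One) (\<lambda>y. (a (y + (- s) *\<^sub>R v) - a y) / (- s) * h y)"
proof -
  define H where "H y = a (y - s *\<^sub>R v) * h y" for y
  have "continuous_on UNIV H"
    unfolding H_def using continuous_on_translate[OF ca, of "- s *\<^sub>R v"] ch by (auto intro!: continuous_intros)
  moreover have "unit_periodic H"
    unfolding unit_periodic_def
  proof (intro ballI allI)
    fix k y :: 'a assume k: "k \<in> Basis"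
    have "a (y + k - s *\<^sub>R v) = a ((y - s *\<^sub>R v) + k)" by (simp add: algebra_simps)
    with k pa ph show "H (y + k) = H y" by (simp add: H_def unit_periodic_def)
  qed
  ultimately have "integral (cbox 0 One) (\<lambda>y. H (y + s *\<^sub>R v)) = integral (cbox 0 One) H"
    by (rule integral_unit_cube_shift)
  then have "integral (cbox 0 One) (\<lambda>y. a y * h (y + s *\<^sub>R v)) = integral (cbox 0 One) (\<lambda>y. a (y - s *\<^sub>R v) * h y)"
    unfolding H_def by simp
  moreover have "continuous_on UNIV (\<lambda>y. a y * h (y + s *\<^sub>R v))"
    "continuous_on UNIV (\<lambda>y. a (y - s *\<^sub>R v) * h y)" "continuous_on UNIV (\<lambda>y. a y * h y)"
    using continuous_on_translate[OF ca, of "- s *\<^sub>R v"] continuous_on_translate[OF ch, of "s *\<^sub>R v"] ca ch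
    by (auto intro!: continuous_intros)
  ultimately have "integral (cbox 0 One) (\<lambda>y. a y * ((h (y + s *\<^sub>R v) - h y) / s))
      = (integral (cbox 0 One) (\<lambda>y. a (y - s *\<^sub>R v) * h y) - integral (cbox 0 One) (\<lambda>y. a y * h y)) / s"
    "integral (cbox 0 One) (\<lambda>y. (a (y + (- s) *\<^sub>R v) - a y) / (- s) * h y)
      = (integral (cbox 0 One) (\<lambda>y. a (y - s *\<^sub>R v) * h y) - integral (cbox 0 One) (\<lambda>y. a y * h y)) / (- s)"
    by (simp_all add: right_diff_distrib left_diff_distrib integral_diff integrable_on_cbox_if_continuous)
  then show ?thesis by (simp only: divide_minus_right minus_minus)
qed

text \<open>Integrate by parts against the difference quotient of \<open>b\<close> in direction \<open>v\<close>, move that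
  difference quotient onto \<open>a\<close>, and let the step tend to \<open>0\<close>; no second derivatives occur.\<close>

lemma integral_unit_cube_derivative_swap:
  fixes a b :: "'a::euclidean_space \<Rightarrow> real"
  assumes da: "\<And>y. (a has_derivative a' y) (at y)" and ca: "\<And>w. continuous_on UNIV (\<lambda>y. a' y w)"
    and pa: "unit_periodic a"
    and db: "\<And>y. (b has_derivative b' y) (at y)" and cb: "\<And>w. continuous_on UNIV (\<lambda>y. b' y w)"
    and pb: "unit_periodic b"
  shows "integral (cbox 0 One) (\<lambda>y. a' y u * b' y v) = integral (cbox 0 One) (\<lambda>y. a' y v * b' y u)"
proof -
  define I where "I s = integral (cbox 0 One) (\<lambda>y. a' y u * ((b (y + s *\<^sub>R v) - b y) / s))" for s
  define J where "J s = integral (cbox 0 One) (\<lambda>y. b' y u * ((a (y + s *\<^sub>R v) - a y) / s))" for s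
  have perb': "unit_periodic (\<lambda>y. b' y u)"
    using unit_periodic_derivative[OF db pb] by (simp add: unit_periodic_def)
  have IJ: "I s = J (- s)" for s
  proof -
    define Db where "Db y = (b (y + s *\<^sub>R v) - b y) / s" for y
    have dDb: "(Db has_derivative (\<lambda>h. (b' (y + s *\<^sub>R v) h - b' y h) / s)) (at y)" for y
      unfolding Db_def
      by (rule bounded_linear.has_derivative[OF bounded_linear_divide
            has_derivative_diff[OF has_derivative_translate[OF db] db]])
    have cDb: "continuous_on UNIV (\<lambda>y. (b' (y + s *\<^sub>R v) u - b' y u) / s)"
      using continuous_on_translate[OF cb, of "s *\<^sub>R v"] cb by (cases "s = 0") (auto intro!: continuous_intros)
    have pDb: "unit_periodic Db"
      using unit_periodic_shift[OF pb] pb by (simp add: Db_def unit_periodic_def)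
    have "I s = - integral (cbox 0 One) (\<lambda>y. a y * ((b' (y + s *\<^sub>R v) u - b' y u) / s))"
      unfolding I_def Db_def[symmetric] using integral_unit_cube_by_parts[OF da dDb ca cDb pa pDb] .
    also have "\<dots> = J (- s)"
      using integral_unit_cube_difference_quotient_by_parts[OF continuous_on_if_has_derivative[OF da] cb pa perb']
      by (simp add: J_def mult.commute)
    finally show ?thesis .
  qed
  have limI: "(I \<longlongrightarrow> integral (cbox 0 One) (\<lambda>y. a' y u * b' y v)) (at 0)"
    unfolding I_def by (rule tendsto_integral_difference_quotient[OF db cb ca])
  have limJ: "((\<lambda>s. J (- s)) \<longlongrightarrow> integral (cbox 0 One) (\<lambda>y. b' y u * a' y v)) (at 0)"
  proof -
    have "(J \<longlongrightarrow> integral (cbox 0 One) (\<lambda>y. b' y u * a' y v)) (at 0)"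
      unfolding J_def by (rule tendsto_integral_difference_quotient[OF da ca cb])
    then have "(J \<longlongrightarrow> integral (cbox 0 One) (\<lambda>y. b' y u * a' y v)) (filtermap uminus (at 0))"
      by (simp add: filtermap_at_minus)
    then show ?thesis
      unfolding filterlim_filtermap .
  qed
  have "I = (\<lambda>s. J (- s))" using IJ by (rule ext)
  with limI limJ have "integral (cbox 0 One) (\<lambda>y. a' y u * b' y v)
      = integral (cbox 0 One) (\<lambda>y. b' y u * a' y v)"
    using tendsto_unique[OF at_neq_bot] by blast
  then show ?thesis by (simp add: mult.commute)
qed

definition fueter :: "(real^4 \<Rightarrow> real^4) \<Rightarrow> real^4" where
  "fueter D = D qone + qmult qe1 (D qe1) + qmult qe2 (D qe2) + qmult qe3 (D qe3)"

lemma qmult_diff_right: "qmult p (x - y) = qmult p x - qmult p y"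
  by (simp add: vec_eq_iff forall_4 qmult_def qmk_def qt_def qx1_def qx2_def qx3_def algebra_simps)

lemma qunits_axis: "qone = axis 1 1" "qe1 = axis 2 1" "qe2 = axis 3 1" "qe3 = axis 4 1"
  by (auto simp: vec_eq_iff forall_4 qone_def qe1_def qe2_def qe3_def qmk_def axis_def)

lemma fueter_diff: "fueter (\<lambda>v. D1 v - D2 v) = fueter D1 - fueter D2"
  by (simp add: fueter_def qmult_diff_right algebra_simps)

definition jacobian_minor :: "(4 \<Rightarrow> real^4) \<Rightarrow> 4 \<Rightarrow> 4 \<Rightarrow> 4 \<Rightarrow> 4 \<Rightarrow> real" where
  "jacobian_minor D i k j l = D i $ j * D k $ l - D i $ l * D k $ j"

lemma fueter_sum_inner_eq_minors:
  fixes D :: "4 \<Rightarrow> real^4"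
  assumes "D 1 + qmult qe1 (D 2) + qmult qe2 (D 3) + qmult qe3 (D 4) = 0"
  shows "(\<Sum>i\<in>UNIV. D i \<bullet> D i) = 2 * (jacobian_minor D 1 2 1 2 + jacobian_minor D 1 3 1 3
      + jacobian_minor D 1 4 1 4 - jacobian_minor D 2 3 2 3 - jacobian_minor D 2 4 2 4
      - jacobian_minor D 3 4 3 4 - jacobian_minor D 1 3 2 4 + jacobian_minor D 1 4 2 3
      - jacobian_minor D 2 3 1 4 + jacobian_minor D 2 4 1 3 + jacobian_minor D 1 2 3 4
      - jacobian_minor D 3 4 1 2)"
proof -
  have c: "(D 1 + qmult qe1 (D 2) + qmult qe2 (D 3) + qmult qe3 (D 4)) $ m = 0" for m
    using assms by simp
  have F: "D 1 $ 1 - D 2 $ 2 - D 3 $ 3 - D 4 $ 4 = 0" "D 1 $ 2 + D 2 $ 1 + D 3 $ 4 - D 4 $ 3 = 0"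
    "D 1 $ 3 - D 2 $ 4 + D 3 $ 1 + D 4 $ 2 = 0" "D 1 $ 4 + D 2 $ 3 - D 3 $ 2 + D 4 $ 1 = 0"
    using c[of 1] c[of 2] c[of 3] c[of 4]
    by (simp_all add: qmult_def qmk_def qt_def qx1_def qx2_def qx3_def qe1_def qe2_def qe3_def)
  have "(\<Sum>i\<in>UNIV. D i \<bullet> D i) = (D 1 $ 1 - D 2 $ 2 - D 3 $ 3 - D 4 $ 4)\<^sup>2
      + (D 1 $ 2 + D 2 $ 1 + D 3 $ 4 - D 4 $ 3)\<^sup>2 + (D 1 $ 3 - D 2 $ 4 + D 3 $ 1 + D 4 $ 2)\<^sup>2
      + (D 1 $ 4 + D 2 $ 3 - D 3 $ 2 + D 4 $ 1)\<^sup>2 + 2 * (jacobian_minor D 1 2 1 2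
      + jacobian_minor D 1 3 1 3 + jacobian_minor D 1 4 1 4 - jacobian_minor D 2 3 2 3
      - jacobian_minor D 2 4 2 4 - jacobian_minor D 3 4 3 4 - jacobian_minor D 1 3 2 4
      + jacobian_minor D 1 4 2 3 - jacobian_minor D 2 3 1 4 + jacobian_minor D 2 4 1 3
      + jacobian_minor D 1 2 3 4 - jacobian_minor D 3 4 1 2)"
    by (simp add: inner_vec_def sum_4 jacobian_minor_def power2_eq_square algebra_simps)
  with F show ?thesis by simp
qed

lemma integral_unit_cube_jacobian_minor:
  fixes G :: "'a::euclidean_space \<Rightarrow> real^4" and u :: "4 \<Rightarrow> 'a"
  assumes der: "\<And>y. (G has_derivative G' y) (at y)" and cont: "\<And>w. continuous_on UNIV (\<lambda>y. G' y w)"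
    and per: "unit_periodic G"
  shows "((\<lambda>y. jacobian_minor (\<lambda>i. G' y (u i)) i k j l) has_integral 0) (cbox 0 One)"
proof -
  have comp_der: "((\<lambda>y. G y $ j) has_derivative (\<lambda>w. G' y w $ j)) (at y)" for j y
    using bounded_linear.has_derivative[OF bounded_linear_vec_nth der] .
  have comp_cont: "continuous_on UNIV (\<lambda>y. G' y w $ j)" for j w
    using cont by (intro continuous_intros)
  have comp_per: "unit_periodic (\<lambda>y. G y $ j)" for j
    using per by (simp add: unit_periodic_def)
  have swap: "integral (cbox 0 One) (\<lambda>y. G' y (u i) $ j * G' y (u k) $ l)
      = integral (cbox 0 One) (\<lambda>y. G' y (u i) $ l * G' y (u k) $ j)"
    using integral_unit_cube_derivative_swap[OF comp_der[where j = j] comp_cont[where j = j] comp_per[of j]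
      comp_der[where j = l] comp_cont[where j = l] comp_per[of l], of "u i" "u k"]
    by (simp add: mult.commute)
  have "(\<lambda>y. G' y (u i) $ j * G' y (u k) $ l) integrable_on cbox 0 One"
    "(\<lambda>y. G' y (u i) $ l * G' y (u k) $ j) integrable_on cbox 0 One"
    using cont by (auto intro!: integrable_on_cbox_if_continuous continuous_intros)
  from has_integral_diff[OF this[THEN integrable_integral]] show ?thesis
    unfolding jacobian_minor_def swap by simp
qed

lemma unit_periodic_fueter_derivative_eq_0:
  fixes G :: "'a::euclidean_space \<Rightarrow> real^4" and u :: "4 \<Rightarrow> 'a"
  assumes der: "\<And>y. (G has_derivative G' y) (at y)" and cont: "\<And>w. continuous_on UNIV (\<lambda>y. G' y w)"
    and per: "unit_periodic G"
    and fueter: "\<And>y. G' y (u 1) + qmult qe1 (G' y (u 2)) + qmult qe2 (G' y (u 3))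
      + qmult qe3 (G' y (u 4)) = 0"
  shows "G' y (u i) = 0"
proof -
  define D where "D y i = G' y (u i)" for y i
  have cD: "continuous_on UNIV (\<lambda>y. D y i)" for i
    unfolding D_def by (rule cont)
  have minor: "((\<lambda>y. jacobian_minor (D y) i k j l) has_integral 0) (cbox 0 One)" for i k j l
    unfolding D_def using integral_unit_cube_jacobian_minor[OF der cont per] .
  define E where "E y = (\<Sum>i\<in>UNIV. D y i \<bullet> D y i)" for y
  define M where "M y = jacobian_minor (D y) 1 2 1 2 + jacobian_minor (D y) 1 3 1 3
    + jacobian_minor (D y) 1 4 1 4 - jacobian_minor (D y) 2 3 2 3 - jacobian_minor (D y) 2 4 2 4
    - jacobian_minor (D y) 3 4 3 4 - jacobian_minor (D y) 1 3 2 4 + jacobian_minor (D y) 1 4 2 3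
    - jacobian_minor (D y) 2 3 1 4 + jacobian_minor (D y) 2 4 1 3 + jacobian_minor (D y) 1 2 3 4
    - jacobian_minor (D y) 3 4 1 2" for y
  have "E = (\<lambda>y. 2 * M y)"
    unfolding E_def M_def fun_eq_iff by (intro allI fueter_sum_inner_eq_minors) (simp add: D_def fueter)
  moreover have "(M has_integral 0) (cbox 0 One)"
    unfolding M_def
    by (intro has_integral_add[where k = 0 and l = 0, simplified]
        has_integral_diff[where k = 0 and l = 0, simplified] minor)
  ultimately have "(E has_integral 0) (cbox 0 One)"
    using has_integral_mult_right[of M 0 "cbox 0 One" 2] by simp
  moreover have "continuous_on (cbox 0 One) E"
    unfolding E_def using cD by (auto intro!: continuous_intros intro: continuous_on_subset)
  ultimately have "E y = 0" if "y \<in> cbox 0 One" for y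
    using has_integral_0_cbox_imp_0[of 0 One E y] that by (simp add: E_def sum_nonneg box_ne_empty)
  then have cube: "D y i = 0" if "y \<in> cbox 0 One" for y
    using that sum_nonneg_eq_0_iff[of UNIV "\<lambda>i. D y i \<bullet> D y i"] by (simp add: E_def)
  have perD: "unit_periodic (\<lambda>y. D y i)"
    using unit_periodic_derivative[OF der per] by (simp add: D_def unit_periodic_def)
  obtain z where "z \<in> cbox 0 One" "\<And>x. D (x + y) i = D (x + z) i"
    using unit_periodic_cube_representative[OF perD, of y] by blast
  then show ?thesis using cube by (metis D_def add_0)
qed

lemma linear_surj_Basis_onto:
  fixes lam :: "'i \<Rightarrow> 'a::euclidean_space"
  assumes "finite I" "card I = DIM('a)" "inj_on lam I" "independent (lam ` I)"
  obtains A :: "'a \<Rightarrow> 'a" where "linear A" "surj A" "A ` Basis = lam ` I"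
proof -
  have "card (Basis :: 'a set) = card (lam ` I)" using assms(2,3) by (simp add: card_image)
  then obtain h where h: "bij_betw h (Basis :: 'a set) (lam ` I)"
    using finite_same_card_bij[OF finite_Basis finite_imageI[OF assms(1)]] by blast
  then have "independent (h ` Basis)" "inj_on h Basis"
    using assms(4) by (simp_all add: bij_betw_def)
  then obtain A where A: "linear A" "inj A" "\<forall>x\<in>Basis. A x = h x"
    using linear_independent_extend_inj[OF independent_Basis] by blast
  have "A ` Basis = lam ` I"
    using image_cong[OF refl, of Basis A h] A(3) bij_betw_imp_surj_on[OF h] by simp
  moreover have "surj A" using linear_injective_imp_surjective[OF A(1,2)] by simp
  ultimately show ?thesis using that A(1) by blast
qed

lemma lattice_periodic_fueter_derivative_eq_0:
  fixes g :: "real^4 \<Rightarrow> real^4" and lam :: "'i \<Rightarrow> real^4"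
  assumes der: "\<And>q. (g has_derivative \<omega> q) (at q)" and cont: "\<And>v. continuous_on UNIV (\<lambda>q. \<omega> q v)"
    and fueter: "\<And>q. fueter (\<omega> q) = 0"
    and I: "finite I" "card I = 4" "inj_on lam I" "independent (lam ` I)"
    and per: "\<And>i q. i \<in> I \<Longrightarrow> g (q + lam i) = g q"
  shows "\<omega> q v = 0"
proof -
  have "card I = DIM(real^4)" using I(2) by simp
  then obtain A :: "real^4 \<Rightarrow> real^4" where A: "linear A" "surj A" "A ` Basis = lam ` I"
    using linear_surj_Basis_onto[OF I(1) _ I(3,4)] by blast
  define u where "u i = inv A (axis i 1)" for i
  have u: "A (u i) = axis i 1" for i unfolding u_def by (rule surj_f_inv_f[OF \<open>surj A\<close>])
  have axes: "\<omega> (A y) (axis i 1) = 0" for y i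
  proof -
    have "((\<lambda>y. g (A y)) has_derivative (\<lambda>w. \<omega> (A y) (A w))) (at y)" for y
      using has_derivative_compose[OF linear_imp_has_derivative[OF A(1)] der] by (simp add: o_def)
    moreover have "continuous_on UNIV (\<lambda>y. \<omega> (A y) (A w))" for w
      by (rule continuous_on_compose2[OF cont linear_continuous_on])
        (auto simp: linear_conv_bounded_linear[symmetric] A(1))
    moreover have "unit_periodic (\<lambda>y. g (A y))"
      unfolding unit_periodic_def
    proof (intro ballI allI)
      fix k y :: "real^4" assume "k \<in> Basis"
      then obtain i where "i \<in> I" "A k = lam i" using A(3) by blast
      then show "g (A (y + k)) = g (A y)" using per by (simp add: linear_add[OF A(1)])
    qed
    moreover have "\<omega> (A y) (A (u 1)) + qmult qe1 (\<omega> (A y) (A (u 2))) + qmult qe2 (\<omega> (A y) (A (u 3)))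
        + qmult qe3 (\<omega> (A y) (A (u 4))) = 0" for y
      using fueter[of "A y"] by (simp add: fueter_def u qunits_axis)
    ultimately have "\<omega> (A y) (A (u i)) = 0"
      by (rule unit_periodic_fueter_derivative_eq_0)
    then show ?thesis by (simp add: u)
  qed
  have "\<omega> q b = 0" if "b \<in> Basis" for b
  proof -
    obtain i where "b = axis i 1" using \<open>b \<in> Basis\<close> by (auto simp: Basis_vec_def)
    moreover have "q = A (inv A q)" by (rule surj_f_inv_f[OF \<open>surj A\<close>, symmetric])
    ultimately show ?thesis using axes by metis
  qed
  moreover have "linear (\<omega> q)" using der has_derivative_linear by blast
  ultimately have "\<omega> q = (\<lambda>v. 0)" using linear_eq_stdbasis[OF _ linear_zero] by blast
  then show ?thesis by simp
qed

lemma translation_invariant_if_derivative_invariant: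
  fixes g :: "'a::real_normed_vector \<Rightarrow> 'b::real_normed_vector"
  assumes der: "\<And>q. (g has_derivative \<omega> q) (at q)" and per: "\<And>q. \<omega> (q + c) = \<omega> q"
    and mid: "g ((1/2) *\<^sub>R c) = g (- (1/2) *\<^sub>R c)"
  shows "g (q + c) = g q"
proof -
  have "\<exists>C. \<forall>x\<in>UNIV. g (x + c) - g x = C"
  proof (rule has_derivative_zero_constant)
    fix x
    have "((\<lambda>x. g (x + c) - g x) has_derivative (\<lambda>v. \<omega> (x + c) v - \<omega> x v)) (at x)"
      by (rule has_derivative_diff[OF has_derivative_translate[OF der] der])
    then show "((\<lambda>x. g (x + c) - g x) has_derivative (\<lambda>h. 0)) (at x within UNIV)"
      by (simp add: per)
  qed simp
  then obtain C where C: "\<And>x. g (x + c) - g x = C" by blast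
  have "- (1/2) *\<^sub>R c + c = (1/2) *\<^sub>R c" using scaleR_left_distrib[of "- (1/2)" 1 c] by simp
  then have "C = 0" using C[of "- (1/2) *\<^sub>R c"] mid by simp
  then show ?thesis using C[of q] by simp
qed

lemma left_regular_derivative:
  assumes "left_regular f" and der: "\<And>q. (f has_derivative \<omega> q) (at q)"
  shows "continuous_on UNIV (\<lambda>q. \<omega> q v)"
    and "fueter (\<omega> q) = 0"
proof -
  obtain f' where f': "\<And>q. (f has_derivative f' q) (at q)" "\<And>v. continuous_on UNIV (\<lambda>q. f' q v)"
    "\<And>q. f' q qone + qmult qe1 (f' q qe1) + qmult qe2 (f' q qe2) + qmult qe3 (f' q qe3) = 0"
    using assms(1) unfolding left_regular_def by blast
  have "f' q = \<omega> q" for q using has_derivative_unique[OF f'(1) der] .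
  with f'(2,3) show "continuous_on UNIV (\<lambda>q. \<omega> q v)" "fueter (\<omega> q) = 0"
    by (simp_all add: fueter_def)
qed

lemma lattice_generator:
  assumes "h \<in> {1..4}"
  shows "lam h \<in> lattice lam"
proof -
  have "(\<Sum>j\<in>{1..4}. of_int (if j = h then 1 else 0) *\<^sub>R lam j) = (\<Sum>j\<in>{1..4}. if j = h then lam j else 0)"
    by (rule sum.cong) auto
  also have "\<dots> = lam h" using assms by (simp add: sum.delta')
  finally have gen: "lam h = (\<Sum>j\<in>{1..4}. of_int (if j = h then 1 else 0) *\<^sub>R lam j)"
    by (rule sym)
  show ?thesis unfolding lattice_def
    by (intro CollectI exI[of _ "\<lambda>j. if j = h then 1 else 0"]) (use gen in simp)
qed

lemma H1_elim:
  assumes "\<omega> \<in> H1 lam"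
  obtains f where "\<And>q. (f has_derivative \<omega> q) (at q)" "\<And>v. continuous_on UNIV (\<lambda>q. \<omega> q v)"
    "\<And>q. fueter (\<omega> q) = 0" "\<And>h q. h \<in> {1..4} \<Longrightarrow> \<omega> (q + lam h) = \<omega> q"
proof -
  obtain f where f: "left_regular f" "\<And>q. (f has_derivative \<omega> q) (at q)"
    and per: "\<And>l q. l \<in> lattice lam \<Longrightarrow> \<omega> (q + l) = \<omega> q"
    using assms unfolding H1_def by blast
  show ?thesis
    using that[OF f(2) left_regular_derivative[OF f]] per[OF lattice_generator] by blast
qed

lemma form_integral_gam:
  assumes der: "\<And>q. (f has_derivative \<omega> q) (at q)"
  shows "form_integral \<omega> (gam lam h) = f ((1/2) *\<^sub>R lam h) - f (- (1/2) *\<^sub>R lam h)"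
proof -
  have gam: "(gam lam h has_vector_derivative lam h) (at s within {0..1})" for s
    unfolding gam_def has_vector_derivative_def by (auto intro!: derivative_eq_intros)
  have "((\<lambda>s. f (gam lam h s)) has_vector_derivative \<omega> (gam lam h s) (lam h)) (at s within {0..1})" for s
  proof -
    have "((\<lambda>s. f (gam lam h s)) has_derivative (\<lambda>t. \<omega> (gam lam h s) (t *\<^sub>R lam h))) (at s)"
      unfolding gam_def by (rule has_derivative_compose[OF _ der]) (auto intro!: derivative_eq_intros)
    then show ?thesis unfolding has_vector_derivative_def
      by (simp add: linear_cmul[OF has_derivative_linear[OF der]] has_derivative_at_withinI)
  qed
  then have "((\<lambda>s. \<omega> (gam lam h s) (lam h)) has_integral (f (gam lam h 1) - f (gam lam h 0))) {0..1}"
    by (intro fundamental_theorem_of_calculus) auto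
  then have "integral {0..1} (\<lambda>s. \<omega> (gam lam h s) (lam h)) = f (gam lam h 1) - f (gam lam h 0)"
    by (rule integral_unique)
  moreover have "vector_derivative (gam lam h) (at s within {0..1}) = lam h" if "s \<in> {0..1}" for s
    using vector_derivative_within_cbox[of 0 1 s "gam lam h" "lam h"] gam that by (simp add: cbox_interval)
  then have "form_integral \<omega> (gam lam h) = integral {0..1} (\<lambda>s. \<omega> (gam lam h s) (lam h))"
    unfolding form_integral_def by (intro integral_cong) simp
  ultimately show ?thesis by (simp add: gam_def)
qed

lemma period_map_eq_imp_form_integral_eq:
  assumes "period_map lam \<omega>1 = period_map lam \<omega>2" and "h \<in> {1..4}"
  shows "form_integral \<omega>1 (gam lam h) = form_integral \<omega>2 (gam lam h)"
proof -
  have nth: "period_map lam \<omega>1 $ i = period_map lam \<omega>2 $ i" for i using assms(1) by simp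
  have "h = 1 \<or> h = 2 \<or> h = 3 \<or> h = 4" using assms(2) by auto
  then show ?thesis using nth[of 1] nth[of 2] nth[of 3] nth[of 4] by (auto simp: period_map_def)
qed

lemma equal_periods_imp_periodic_difference:
  assumes der1: "\<And>q. (f1 has_derivative \<omega>1 q) (at q)" and der2: "\<And>q. (f2 has_derivative \<omega>2 q) (at q)"
    and per1: "\<And>q. \<omega>1 (q + lam h) = \<omega>1 q" and per2: "\<And>q. \<omega>2 (q + lam h) = \<omega>2 q"
    and periods: "period_map lam \<omega>1 = period_map lam \<omega>2" and h: "h \<in> {1..4}"
  shows "f1 (q + lam h) - f2 (q + lam h) = f1 q - f2 q"
proof (rule translation_invariant_if_derivative_invariant[where g = "\<lambda>q. f1 q - f2 q"])
  show "((\<lambda>q. f1 q - f2 q) has_derivative (\<lambda>v. \<omega>1 q v - \<omega>2 q v)) (at q)" for q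
    by (rule has_derivative_diff[OF der1 der2])
  show "(\<lambda>v. \<omega>1 (q + lam h) v - \<omega>2 (q + lam h) v) = (\<lambda>v. \<omega>1 q v - \<omega>2 q v)" for q
    by (simp add: per1 per2)
  show "f1 ((1/2) *\<^sub>R lam h) - f2 ((1/2) *\<^sub>R lam h) = f1 (- (1/2) *\<^sub>R lam h) - f2 (- (1/2) *\<^sub>R lam h)"
    using period_map_eq_imp_form_integral_eq[OF periods h]
    by (simp add: form_integral_gam[OF der1] form_integral_gam[OF der2] algebra_simps)
qed

theorem mainTheorem13:
  fixes lam :: "nat \<Rightarrow> real^4"
  assumes "inj_on lam {1..4}" and "independent (lam ` {1..4})"
  shows "inj_on (period_map lam) (H1 lam)"
proof (rule inj_onI)
  fix \<omega>1 \<omega>2 assume "\<omega>1 \<in> H1 lam" "\<omega>2 \<in> H1 lam"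
    and periods: "period_map lam \<omega>1 = period_map lam \<omega>2"
  obtain f1 where f1: "\<And>q. (f1 has_derivative \<omega>1 q) (at q)" "\<And>v. continuous_on UNIV (\<lambda>q. \<omega>1 q v)"
    "\<And>q. fueter (\<omega>1 q) = 0" "\<And>h q. h \<in> {1..4} \<Longrightarrow> \<omega>1 (q + lam h) = \<omega>1 q"
    using H1_elim[OF \<open>\<omega>1 \<in> H1 lam\<close>] by blast
  obtain f2 where f2: "\<And>q. (f2 has_derivative \<omega>2 q) (at q)" "\<And>v. continuous_on UNIV (\<lambda>q. \<omega>2 q v)"
    "\<And>q. fueter (\<omega>2 q) = 0" "\<And>h q. h \<in> {1..4} \<Longrightarrow> \<omega>2 (q + lam h) = \<omega>2 q"
    using H1_elim[OF \<open>\<omega>2 \<in> H1 lam\<close>] by blast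
  have "\<omega>1 q v - \<omega>2 q v = 0" for q v
  proof (rule lattice_periodic_fueter_derivative_eq_0[where g = "\<lambda>q. f1 q - f2 q"
        and \<omega> = "\<lambda>q v. \<omega>1 q v - \<omega>2 q v" and I = "{1..4}"])
    show "((\<lambda>q. f1 q - f2 q) has_derivative (\<lambda>v. \<omega>1 q v - \<omega>2 q v)) (at q)" for q
      by (rule has_derivative_diff[OF f1(1) f2(1)])
    show "continuous_on UNIV (\<lambda>q. \<omega>1 q v - \<omega>2 q v)" for v
      using f1(2) f2(2) by (rule continuous_on_diff)
    show "fueter (\<lambda>v. \<omega>1 q v - \<omega>2 q v) = 0" for q
      by (simp add: fueter_diff f1(3) f2(3))
    show "f1 (q + lam h) - f2 (q + lam h) = f1 q - f2 q" if "h \<in> {1..4}" for h q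
      using equal_periods_imp_periodic_difference[OF f1(1) f2(1) f1(4)[OF that] f2(4)[OF that] periods that] .
  qed (use assms in auto)
  then show "\<omega>1 = \<omega>2" by (simp add: fun_eq_iff)
qed

end
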